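(* Let $p$ be a prime, let $e\geq2$ and $d\geq2$ be integers, and let $\mathcal P(p^e,d)\subset\mathbb R^d$ be the convex hull of all $d$-dimensional vector-factorisations of $p^e$ (its vertices are exactly these vector-factorisations $(p^{\beta_1},\dots,p^{\beta_d})$ with $\beta\in\mathbb N^d$, $\sum_i\beta_i=e$). Let $S$ be a non-empty set of vertices of $\mathcal P(p^e,d)$, and define $m(S)=(m_1,\dots,m_d)$ and $M(S)=(M_1,\dots,M_d)$ by $m_i=\min_{(p^{\beta_1},\dots,p^{\beta_d})\in S}\beta_i$ and $M_i=\max_{(p^{\beta_1},\dots,p^{\beta_d})\in S}\beta_i$. If $M(S)-m(S)\in\{0,1\}^d$, then $S$ is contained in the set of vertices of a regular facet of $\mathcal P(p^e,d)$.
   Context: $\mathbb N=\{0,1,2,\dots\}$. A $d$-dimensional vector-factorisation of $N\geq1$ is a vector $(v_1,\dots,v_d)\in\mathbb N^d$ with $v_1\cdots v_d=N$. For $\lambda\in\{1,\dots,\min(e,d-1)\}$, $\mathcal R_\lambda(d,e)$ is the set of all $\alpha\in\mathbb N^d$ with $\min(\alpha_1,\dots,\alpha_d)=0$, $\max(\alpha_1,\dots,\alpha_d)\,d<e+\sum_i\alpha_i$ and $e+\sum_i\alpha_i\equiv\lambda\pmod d$; for such $\alpha$, $\mu(\alpha)$ is the integer with $\mu(\alpha)d+\lambda=e+\sum_i\alpha_i$. A regular facet of $\mathcal P(p^e,d)$ is a facet of the form $F_\alpha=\{x\in\mathcal P(p^e,d):\sum_{i=1}^dp^{\alpha_i}x_i=\lambda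 p^{\mu(\alpha)+1}+(d-\lambda)p^{\mu(\alpha)}\}$ for some $\lambda\in\{1,\dots,\min(e,d-1)\}$ and $\alpha\in\mathcal R_\lambda(d,e)$; equivalently, the convex hull of $\{(p^{\mu-\alpha_1+\epsilon_1},\dots,p^{\mu-\alpha_d+\epsilon_d}):\epsilon\in\{0,1\}^d,\sum_i\epsilon_i=\lambda\}$ with $\mu=\mu(\alpha)$. *)

theory Defs
  imports "HOL-Analysis.Analysis"
begin

text \<open>d-dimensional vector-factorisations of N, embedded in real^'d (d = CARD('d)).\<close>
definition vec_facts :: "nat \<Rightarrow> (real^'d) set" where
  "vec_facts N = {(\<chi> i. real (v i)) | v :: 'd \<Rightarrow> nat. (\<Prod>i\<in>UNIV. v i) = N}"

definition Ppoly :: "nat \<Rightarrow> (real^'d) set" where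
  "Ppoly N = convex hull (vec_facts N)"

definition pvec :: "nat \<Rightarrow> ('d \<Rightarrow> nat) \<Rightarrow> real^'d" where
  "pvec p b = (\<chi> i. real p ^ b i)"

definition Rset :: "nat \<Rightarrow> nat \<Rightarrow> ('d::finite \<Rightarrow> nat) set" where
  "Rset lam e = {\<alpha>. Min (range \<alpha>) = 0
      \<and> Max (range \<alpha>) * CARD('d) < e + (\<Sum>i\<in>UNIV. \<alpha> i)
      \<and> (e + (\<Sum>i\<in>UNIV. \<alpha> i)) mod CARD('d) = lam mod CARD('d)}"

text \<open>mu(alpha): the integer with mu*d + lambda = e + sum alpha.\<close>
definition mu :: "nat \<Rightarrow> nat \<Rightarrow> ('d::finite \<Rightarrow> nat) \<Rightarrow> nat" where
  "mu lam e \<alpha> = (e + (\<Sum>i\<in>UNIV. \<alpha> i) - lam) div CARD('d)"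

definition Falpha :: "nat \<Rightarrow> nat \<Rightarrow> nat \<Rightarrow> ('d::finite \<Rightarrow> nat) \<Rightarrow> (real^'d) set" where
  "Falpha p e lam \<alpha> = {x \<in> Ppoly (p ^ e).
      (\<Sum>i\<in>UNIV. real p ^ \<alpha> i * x $ i)
        = real lam * real p ^ (mu lam e \<alpha> + 1)
          + (real CARD('d) - real lam) * real p ^ (mu lam e \<alpha>)}"

definition regular_facet :: "nat \<Rightarrow> nat \<Rightarrow> (real^'d) set \<Rightarrow> bool" where
  "regular_facet p e F \<longleftrightarrow> F facet_of Ppoly (p ^ e) \<and>
     (\<exists>lam (\<alpha>::'d \<Rightarrow> nat). 1 \<le> lam \<and> lam \<le> min e (CARD('d) - 1)
        \<and> \<alpha> \<in> Rset lam e \<and> F = Falpha p e lam \<alpha>)"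

end

theory Submission
  imports Defs "HOL-Computational_Algebra.Primes"
begin

text \<open>Write the vertices of \<open>S\<close> as \<open>pvec p b\<close> with \<open>sum b UNIV = e\<close>. The hypothesis puts
  the exponent vectors \<open>b\<close> in a unit box \<open>m + {0,1}^d\<close>, so each of them has exactly
  \<open>\<lambda> = e - sum m UNIV\<close> coordinates on the upper level. If \<open>1 \<le> \<lambda> < d\<close>, put \<open>\<mu> = max m\<close>
  and \<open>\<alpha> = \<mu> - m\<close>. At a vertex \<open>pvec p g\<close> the form \<open>\<Sum>i. p^\<alpha> i * x i\<close> equals
  \<open>\<Sum>i. p^(\<alpha> i + g i)\<close>, where the exponents add up to \<open>d * \<mu> + \<lambda>\<close>; by convexity of
  \<open>t \<mapsto> p^t\<close> every term lies above the secant through \<open>\<mu>\<close> and \<open>\<mu> + 1\<close>, with equality iff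
  the exponent is \<open>\<mu>\<close> or \<open>\<mu> + 1\<close>. Hence \<open>F\<^sub>\<alpha>\<close> is a face containing every box point. It
  misses a vertex \<open>p^e\<close> times a unit vector, and the differences of box points that move one
  unit between two coordinates span its hyperplane, so it is a facet. In the degenerate cases
  \<open>\<lambda> = 0\<close> and \<open>\<lambda> = d\<close> the set \<open>S\<close> is a single vertex, which also lies in a box with \<open>\<lambda> = 1\<close>.\<close>

lemma Bernoulli_inequality_strict:
  fixes y :: real
  assumes "y > 0" "n \<ge> 2"
  shows "1 + real n * y < (1 + y) ^ n"
proof -
  obtain i where n: "n = i + 2" using assms(2) by (metis add.commute le_Suc_ex)
  have "(1 + y) ^ 2 * (1 + real i * y) \<le> (1 + y) ^ 2 * (1 + y) ^ i"
    using Bernoulli_inequality[of y i] assms(1) by (intro mult_left_mono) auto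
  moreover have "1 + real n * y < (1 + y) ^ 2 * (1 + real i * y)"
    using assms(1) n by (simp add: power2_eq_square algebra_simps add_pos_nonneg)
  moreover have "(1 + y) ^ n = (1 + y) ^ 2 * (1 + y) ^ i" unfolding n power_add by (simp add: mult.commute)
  ultimately show ?thesis by linarith
qed

lemma power_gt_secant:
  fixes x :: real
  assumes "x \<ge> 2" "k \<noteq> m" "k \<noteq> m + 1"
  shows "x ^ m + (real k - real m) * (x - 1) * x ^ m < x ^ k"
proof (cases "m \<le> k")
  case True
  then obtain j where k: "k = m + j" and "j \<ge> 2" using le_Suc_ex assms(2,3) by fastforce
  have "x ^ m * (1 + real j * (x - 1)) < x ^ m * x ^ j"
    using Bernoulli_inequality_strict[of "x - 1" j] \<open>j \<ge> 2\<close> assms(1)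
    by (intro mult_strict_left_mono) auto
  then show ?thesis using k by (simp add: power_add algebra_simps)
next
  case False
  then have "1 + (real k - real m) * (x - 1) \<le> 0"
    using assms(1) mult_mono[of 1 "real m - real k" 1 "x - 1"] by (simp add: algebra_simps)
  then have "x ^ m * (1 + (real k - real m) * (x - 1)) \<le> 0"
    using assms(1) by (simp add: mult_nonneg_nonpos)
  moreover have "x ^ m + (real k - real m) * (x - 1) * x ^ m = x ^ m * (1 + (real k - real m) * (x - 1))"
    by (simp add: algebra_simps)
  moreover have "0 < x ^ k" using assms(1) by simp
  ultimately show ?thesis by linarith
qed

lemma power_ge_secant:
  fixes x :: real
  assumes "x \<ge> 2"
  shows "x ^ m + (real k - real m) * (x - 1) * x ^ m \<le> x ^ k"
  using power_gt_secant[OF assms, of k m] by (cases "k = m \<or> k = m + 1") (auto simp: algebra_simps)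

lemma sum_secant_eq:
  fixes x :: real and g :: "'i \<Rightarrow> nat"
  assumes "finite I" "sum g I = card I * m + lam"
  shows "(\<Sum>i\<in>I. x ^ m + (real (g i) - real m) * (x - 1) * x ^ m)
           = real lam * x ^ (m + 1) + (real (card I) - real lam) * x ^ m"
proof -
  have g: "(\<Sum>i\<in>I. real (g i)) = real (card I) * real m + real lam"
    using arg_cong[OF assms(2), of real] by (simp add: of_nat_sum)
  have "(\<Sum>i\<in>I. x ^ m + (real (g i) - real m) * (x - 1) * x ^ m)
      = (\<Sum>i\<in>I. (x ^ m - real m * ((x - 1) * x ^ m)) + real (g i) * ((x - 1) * x ^ m))"
    by (intro sum.cong) (auto simp: algebra_simps)
  also have "\<dots> = real (card I) * (x ^ m - real m * ((x - 1) * x ^ m))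
                    + (\<Sum>i\<in>I. real (g i)) * ((x - 1) * x ^ m)"
    by (simp add: sum.distrib sum_distrib_right)
  also have "\<dots> = real lam * x ^ (m + 1) + (real (card I) - real lam) * x ^ m"
    unfolding g by (simp add: algebra_simps)
  finally show ?thesis .
qed

lemma sum_power_ge_secant:
  fixes x :: real and g :: "'i \<Rightarrow> nat"
  assumes "finite I" "x \<ge> 2" "sum g I = card I * m + lam"
  shows "real lam * x ^ (m + 1) + (real (card I) - real lam) * x ^ m \<le> (\<Sum>i\<in>I. x ^ g i)"
  using sum_mono[of I "\<lambda>i. x ^ m + (real (g i) - real m) * (x - 1) * x ^ m" "\<lambda>i. x ^ g i"]
    power_ge_secant[OF assms(2)] sum_secant_eq[OF assms(1,3), of x] by simp

lemma sum_power_gt_secant: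
  fixes x :: real and g :: "'i \<Rightarrow> nat"
  assumes "finite I" "x \<ge> 2" "sum g I = card I * m + lam"
    and "j \<in> I" "g j \<noteq> m" "g j \<noteq> m + 1"
  shows "real lam * x ^ (m + 1) + (real (card I) - real lam) * x ^ m < (\<Sum>i\<in>I. x ^ g i)"
proof -
  have "(\<Sum>i\<in>I. x ^ m + (real (g i) - real m) * (x - 1) * x ^ m) < (\<Sum>i\<in>I. x ^ g i)"
    using assms(1,4) power_ge_secant[OF assms(2)] power_gt_secant[OF assms(2,5,6)]
    by (intro sum_strict_mono_ex1) auto
  then show ?thesis using sum_secant_eq[OF assms(1,3), of x] by simp
qed

lemma sum_power_eq_secant:
  fixes x :: real and g :: "'i \<Rightarrow> nat"
  assumes "finite I" "sum g I = card I * m + lam" "\<And>i. i \<in> I \<Longrightarrow> g i = m \<or> g i = m + 1"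
  shows "(\<Sum>i\<in>I. x ^ g i) = real lam * x ^ (m + 1) + (real (card I) - real lam) * x ^ m"
proof -
  have "(\<Sum>i\<in>I. x ^ g i) = (\<Sum>i\<in>I. x ^ m + (real (g i) - real m) * (x - 1) * x ^ m)"
  proof (rule sum.cong[OF refl])
    fix i assume "i \<in> I"
    then consider "g i = m" | "g i = m + 1" using assms(3) by blast
    then show "x ^ g i = x ^ m + (real (g i) - real m) * (x - 1) * x ^ m"
      by cases (simp_all add: algebra_simps)
  qed
  then show ?thesis using sum_secant_eq[OF assms(1,2)] by simp
qed

lemma hyperplane_subset_affine_hull_axis_differences:
  fixes S :: "(real^'n) set" and a x0 :: "real^'n" and w :: "'n \<Rightarrow> real"
  assumes "x0 \<in> S" and "c \<noteq> 0" and "\<And>i. a $ i * w i = c"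
    and "\<And>i. i \<noteq> k \<Longrightarrow> \<exists>u\<in>S. \<exists>v\<in>S. u - v = w i *\<^sub>R axis i 1 - w k *\<^sub>R axis k 1"
  shows "{y. a \<bullet> y = a \<bullet> x0} \<subseteq> affine hull S"
proof
  fix y assume "y \<in> {y. a \<bullet> y = a \<bullet> x0}"
  then have "a \<bullet> (y - x0) = 0" by (simp add: inner_diff_right)
  then have az: "(\<Sum>i\<in>UNIV. a $ i * (y - x0) $ i) = 0"
    by (simp only: inner_vec_def inner_real_def)
  define D where "D = span ((\<lambda>x. - x0 + x) ` S)"
  have w0: "w i \<noteq> 0" for i using assms(2) assms(3)[of i] by auto
  have diff: "w i *\<^sub>R axis i 1 - w k *\<^sub>R axis k 1 \<in> D" if ik: "i \<noteq> k" for i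
  proof -
    obtain u v where "u \<in> S" "v \<in> S" "u - v = w i *\<^sub>R axis i 1 - w k *\<^sub>R axis k 1"
      using assms(4)[OF ik] by blast
    moreover have "u - v = (- x0 + u) - (- x0 + v)" by simp
    ultimately show ?thesis unfolding D_def by (metis image_eqI span_base span_diff)
  qed
  have "y - x0 = (\<Sum>i\<in>UNIV - {k}. ((y - x0) $ i / w i) *\<^sub>R (w i *\<^sub>R axis i 1 - w k *\<^sub>R axis k 1))"
    (is "_ = ?s")
  proof (rule vec_eq_iff[THEN iffD2], intro allI)
    fix j
    have sj: "?s $ j = (\<Sum>i\<in>UNIV - {k}. (y - x0) $ i / w i * (w i * (if j = i then 1 else 0) - w k * (if j = k then 1 else 0)))"
      by (simp add: sum_component axis_def)
    show "(y - x0) $ j = ?s $ j"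
    proof (cases "j = k")
      case True
      have "(y - x0) $ i / w i = a $ i * (y - x0) $ i / c" for i
        using assms(2) assms(3)[of i, symmetric] by (auto simp: field_simps)
      then have "?s $ j = - w k / c * (\<Sum>i\<in>UNIV - {k}. a $ i * (y - x0) $ i)"
        unfolding sj using True w0 by (simp add: sum_distrib_left sum_divide_distrib mult.commute mult.left_commute)
      also have "\<dots> = w k / c * (a $ k * (y - x0) $ k)"
      proof -
        have "(\<Sum>i\<in>UNIV - {k}. a $ i * (y - x0) $ i) = - (a $ k * (y - x0) $ k)"
          using az sum.remove[of UNIV k "\<lambda>i. a $ i * (y - x0) $ i"] by simp
        then show ?thesis by simp
      qed
      also have "\<dots> = (y - x0) $ j" using True assms(2) assms(3)[of k, symmetric] by (auto simp: field_simps)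
      finally show ?thesis by (rule sym)
    next
      case False
      have "?s $ j = (\<Sum>i\<in>UNIV - {k}. if i = j then (y - x0) $ j else 0)"
        unfolding sj using False w0 by (intro sum.cong) auto
      then show ?thesis using False by simp
    qed
  qed
  also have "\<dots> \<in> D"
    unfolding D_def by (intro span_sum span_scale diff[unfolded D_def]) simp
  finally have "y \<in> (\<lambda>x. x0 + x) ` D" by (intro image_eqI[of _ _ "y - x0"]) simp_all
  moreover have "affine hull S = (\<lambda>x. x0 + x) ` D"
    unfolding D_def by (rule affine_hull_span_gen) (rule hull_inc[OF assms(1)])
  ultimately show "y \<in> affine hull S" by simp
qed

lemma pvec_in_vec_facts:
  fixes b :: "'d::finite \<Rightarrow> nat"
  assumes "sum b UNIV = e"
  shows "pvec p b \<in> vec_facts (p ^ e)"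
proof -
  have "(\<Prod>i\<in>UNIV. p ^ b i) = p ^ e" by (metis assms power_sum)
  then show ?thesis unfolding vec_facts_def pvec_def
    by (intro CollectI exI[of _ "\<lambda>i. p ^ b i"]) auto
qed

lemma pvec_in_Ppoly:
  fixes b :: "'d::finite \<Rightarrow> nat"
  assumes "sum b UNIV = e"
  shows "pvec p b \<in> Ppoly (p ^ e)"
  unfolding Ppoly_def by (intro hull_inc pvec_in_vec_facts assms)

lemma vec_facts_prime_power:
  assumes "prime p"
  shows "(vec_facts (p ^ e) :: (real^'d::finite) set) = pvec p ` {b. sum b UNIV = e}"
proof
  show "(vec_facts (p ^ e) :: (real^'d) set) \<subseteq> pvec p ` {b. sum b UNIV = e}"
  proof
    fix x :: "real^'d" assume "x \<in> vec_facts (p ^ e)"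
    then obtain v :: "'d \<Rightarrow> nat" where x: "x = (\<chi> i. real (v i))" and v: "(\<Prod>i\<in>UNIV. v i) = p ^ e"
      unfolding vec_facts_def by blast
    have "\<exists>k. v i = p ^ k" for i
      using v divides_primepow_nat[OF assms] by (metis dvd_prodI finite UNIV_I)
    then obtain b where b: "\<And>i. v i = p ^ b i" by metis
    have "p ^ sum b UNIV = p ^ e" using v by (simp add: b power_sum)
    then have "sum b UNIV = e" using assms prime_gt_1_nat power_inject_exp by blast
    moreover have "x = pvec p b" unfolding x pvec_def by (simp add: b)
    ultimately show "x \<in> pvec p ` {b. sum b UNIV = e}" by blast
  qed
  show "pvec p ` {b. sum b UNIV = e} \<subseteq> (vec_facts (p ^ e) :: (real^'d) set)"
    using pvec_in_vec_facts by blast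
qed

lemma inj_pvec:
  assumes "p \<ge> 2"
  shows "inj (pvec p :: ('d::finite \<Rightarrow> nat) \<Rightarrow> real^'d)"
proof (rule injI)
  fix b b' :: "'d \<Rightarrow> nat"
  assume eq: "pvec p b = pvec p b'"
  show "b = b'"
  proof
    fix i
    have "real p ^ b i = real p ^ b' i" using eq unfolding pvec_def by (metis vec_lambda_beta)
    then show "b i = b' i" using assms power_inject_exp[of "real p"] by simp
  qed
qed

lemma exponent_sum_of_extreme_point:
  assumes "prime p" "pvec p b extreme_point_of Ppoly (p ^ e)"
  shows "sum b UNIV = e"
proof -
  have "pvec p b \<in> vec_facts (p ^ e)"
    using assms(2) extreme_point_of_convex_hull unfolding Ppoly_def by blast
  then obtain b' where "pvec p b = pvec p b'" "sum b' UNIV = e"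
    unfolding vec_facts_prime_power[OF assms(1)] by blast
  then show ?thesis using inj_pvec[OF prime_ge_2_nat[OF assms(1)]] by (metis injD)
qed

lemma inner_pvec:
  "(\<chi> i. real p ^ a i) \<bullet> pvec p b = (\<Sum>i\<in>UNIV. real p ^ (a i + b i))"
  unfolding pvec_def inner_vec_def by (simp add: power_add)

lemma Ppoly_supporting_halfspace:
  fixes \<alpha> :: "'d::finite \<Rightarrow> nat"
  assumes "prime p" "e + sum \<alpha> UNIV = CARD('d) * \<mu> + lam" "x \<in> Ppoly (p ^ e)"
  shows "real lam * real p ^ (\<mu> + 1) + (real CARD('d) - real lam) * real p ^ \<mu>
           \<le> (\<chi> i. real p ^ \<alpha> i) \<bullet> x"
proof -
  let ?H = "{x. real lam * real p ^ (\<mu> + 1) + (real CARD('d) - real lam) * real p ^ \<mu>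
                  \<le> (\<chi> i. real p ^ \<alpha> i) \<bullet> x}"
  have "pvec p b \<in> ?H" if "sum b UNIV = e" for b
  proof -
    have "sum (\<lambda>i. \<alpha> i + b i) UNIV = CARD('d) * \<mu> + lam"
      using that assms(2) by (simp add: sum.distrib)
    then show ?thesis
      using sum_power_ge_secant[where x = "real p" and g = "\<lambda>i. \<alpha> i + b i" and I = UNIV]
        prime_ge_2_nat[OF assms(1)] by (simp add: inner_pvec)
  qed
  then have "vec_facts (p ^ e) \<subseteq> ?H" unfolding vec_facts_prime_power[OF assms(1)] by blast
  then have "Ppoly (p ^ e) \<subseteq> ?H"
    unfolding Ppoly_def by (intro hull_minimal) (auto simp: convex_halfspace_ge)
  then show ?thesis using assms(3) by blast
qed

text \<open>The exponents \<open>\<alpha>\<close> of the facet through the box \<open>m + {0,1}^d\<close>: the normal vector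
  \<open>(p ^ \<alpha> i)\<close> rescales every coordinate of the corner \<open>pvec p m\<close> to \<open>p ^ Max (range m)\<close>.\<close>
definition facet_exponents :: "('d::finite \<Rightarrow> nat) \<Rightarrow> 'd \<Rightarrow> nat" where
  "facet_exponents m i = Max (range m) - m i"

lemma facet_exponents_add: "facet_exponents m i + m i = Max (range m)"
  unfolding facet_exponents_def by simp

lemma sum_facet_exponents:
  fixes m :: "'d::finite \<Rightarrow> nat"
  assumes "sum m UNIV + lam = e"
  shows "e + sum (facet_exponents m) UNIV = CARD('d) * Max (range m) + lam"
proof -
  have "sum (facet_exponents m) UNIV + sum m UNIV = CARD('d) * Max (range m)"
    by (simp add: sum.distrib[symmetric] facet_exponents_add)
  then show ?thesis using assms by linarith
qed

lemma mu_facet_exponents: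
  fixes m :: "'d::finite \<Rightarrow> nat"
  assumes "sum m UNIV + lam = e"
  shows "mu lam e (facet_exponents m) = Max (range m)"
  unfolding mu_def sum_facet_exponents[OF assms] by simp

lemma facet_exponents_in_Rset:
  fixes m :: "'d::finite \<Rightarrow> nat"
  assumes "1 \<le> lam" "sum m UNIV + lam = e"
  shows "facet_exponents m \<in> Rset lam e"
proof -
  obtain i0 where i0: "m i0 = Max (range m)" by (metis Max_in UNIV_not_empty finite_imageI finite image_is_empty rangeE)
  have "Min (range (facet_exponents m)) = 0"
    using i0 unfolding facet_exponents_def by (intro Min_eqI) (auto intro!: image_eqI[of _ _ i0])
  moreover have "Max (range (facet_exponents m)) * CARD('d) \<le> CARD('d) * Max (range m)"
    unfolding facet_exponents_def by (simp add: mult.commute)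
  then have "Max (range (facet_exponents m)) * CARD('d) < e + sum (facet_exponents m) UNIV"
    unfolding sum_facet_exponents[OF assms(2)] using assms(1) by linarith
  ultimately show ?thesis
    unfolding Rset_def by (simp add: sum_facet_exponents[OF assms(2)])
qed

lemma Falpha_face_of_Ppoly:
  fixes m :: "'d::finite \<Rightarrow> nat"
  assumes "prime p" "sum m UNIV + lam = e"
  shows "Falpha p e lam (facet_exponents m) face_of Ppoly (p ^ e)"
proof -
  let ?a = "\<chi> i. real p ^ facet_exponents m i"
  let ?c = "real lam * real p ^ (Max (range m) + 1) + (real CARD('d) - real lam) * real p ^ Max (range m)"
  have "Falpha p e lam (facet_exponents m) = Ppoly (p ^ e) \<inter> {x. ?a \<bullet> x = ?c}"
    unfolding Falpha_def mu_facet_exponents[OF assms(2)] inner_vec_def by auto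
  moreover have "convex (Ppoly (p ^ e) :: (real^'d) set)" unfolding Ppoly_def by simp
  ultimately show ?thesis
    using Ppoly_supporting_halfspace[OF assms(1) sum_facet_exponents[OF assms(2)]]
    by (simp add: face_of_Int_supporting_hyperplane_ge)
qed

lemma pvec_in_Falpha:
  fixes m b :: "'d::finite \<Rightarrow> nat"
  assumes "sum m UNIV + lam = e" "sum b UNIV = e" "\<And>i. m i \<le> b i \<and> b i \<le> m i + 1"
  shows "pvec p b \<in> Falpha p e lam (facet_exponents m)"
proof -
  have "pvec p b \<in> Ppoly (p ^ e)" by (rule pvec_in_Ppoly[OF assms(2)])
  moreover have "(\<Sum>i\<in>UNIV. real p ^ (facet_exponents m i + b i))
      = real lam * real p ^ (Max (range m) + 1) + (real CARD('d) - real lam) * real p ^ Max (range m)"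
  proof (rule sum_power_eq_secant)
    show "(\<Sum>i\<in>UNIV. facet_exponents m i + b i) = CARD('d) * Max (range m) + lam"
      using sum_facet_exponents[OF assms(1)] assms(2) by (simp add: sum.distrib)
    show "facet_exponents m i + b i = Max (range m) \<or> facet_exponents m i + b i = Max (range m) + 1" for i
      using assms(3)[of i] facet_exponents_add[of m i] by linarith
  qed simp
  ultimately show ?thesis
    unfolding Falpha_def mu_facet_exponents[OF assms(1)] using inner_pvec[unfolded inner_vec_def]
    by (simp add: pvec_def power_add)
qed

lemma aff_dim_Falpha_ge:
  fixes m :: "'d::finite \<Rightarrow> nat"
  assumes "p \<ge> 2" "1 \<le> lam" "lam < CARD('d)" "sum m UNIV + lam = e"
  shows "int CARD('d) - 1 \<le> aff_dim (Falpha p e lam (facet_exponents m))"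
proof -
  let ?F = "Falpha p e lam (facet_exponents m)"
  let ?a = "\<chi> i. real p ^ facet_exponents m i"
  define w where "w i = (real p - 1) * real p ^ m i" for i
  have box: "pvec p (\<lambda>j. m j + of_bool (j \<in> A)) \<in> ?F" if "card A = lam" for A :: "'d set"
    using assms(4) that by (intro pvec_in_Falpha) (auto simp: sum.distrib)
  have swap: "\<exists>u\<in>?F. \<exists>v\<in>?F. u - v = w i *\<^sub>R axis i 1 - w k *\<^sub>R axis k 1" if "i \<noteq> k" for i k
  proof -
    have "card (UNIV - {i, k}) = CARD('d) - 2" using that by (simp add: card_Diff_subset)
    then have "lam - 1 \<le> card (UNIV - {i, k})" using assms(3) by linarith
    then obtain A where A: "A \<subseteq> UNIV - {i, k}" "card A = lam - 1" "finite A"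
      by (rule obtain_subset_with_card_n)
    then have "i \<notin> A" "k \<notin> A" by auto
    then have "card (insert i A) = lam" "card (insert k A) = lam" using A(2,3) assms(2) by auto
    moreover have "pvec p (\<lambda>j. m j + of_bool (j \<in> insert i A)) - pvec p (\<lambda>j. m j + of_bool (j \<in> insert k A))
        = w i *\<^sub>R axis i 1 - w k *\<^sub>R axis k 1"
    proof (rule vec_eq_iff[THEN iffD2], intro allI)
      fix j
      show "(pvec p (\<lambda>j. m j + of_bool (j \<in> insert i A)) - pvec p (\<lambda>j. m j + of_bool (j \<in> insert k A))) $ j
          = (w i *\<^sub>R axis i 1 - w k *\<^sub>R axis k 1) $ j"
        using A(1) that unfolding pvec_def w_def axis_def by (cases "j = i"; cases "j = k") (auto simp: algebra_simps)
    qed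
    ultimately show ?thesis using box by blast
  qed
  obtain A :: "'d set" where A: "card A = lam"
    using assms(3) obtain_subset_with_card_n[of lam "UNIV :: 'd set"] by auto
  then obtain k where "k \<in> A" using assms(2) by fastforce
  have aw: "?a $ i * w i = (real p - 1) * real p ^ Max (range m)" for i
    using facet_exponents_add[of m i] by (simp add: w_def power_add[symmetric] algebra_simps)
  have hyp: "{y. ?a \<bullet> y = ?a \<bullet> pvec p (\<lambda>j. m j + of_bool (j \<in> A))} \<subseteq> affine hull ?F"
    by (rule hyperplane_subset_affine_hull_axis_differences[OF box[OF A] _ aw swap]) (use assms(1) in simp_all)
  have "?a \<noteq> 0"
  proof
    assume "?a = 0"
    then have "?a $ k = 0" by simp
    then show False using assms(1) by simp
  qed
  then have "int CARD('d) - 1 = aff_dim {y. ?a \<bullet> y = ?a \<bullet> pvec p (\<lambda>j. m j + of_bool (j \<in> A))}"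
    by simp
  also have "\<dots> \<le> aff_dim ?F" using aff_dim_subset[OF hyp] by simp
  finally show ?thesis .
qed

lemma Falpha_neq_Ppoly:
  fixes m :: "'d::finite \<Rightarrow> nat"
  assumes "p \<ge> 2" "e \<ge> 2" "CARD('d) \<ge> 2" "sum m UNIV + lam = e"
  shows "Falpha p e lam (facet_exponents m) \<noteq> Ppoly (p ^ e)"
proof -
  let ?\<mu> = "Max (range m)"
  obtain j t where jt: "facet_exponents m t + (if t = j then e else 0) \<notin> {?\<mu>, ?\<mu> + 1}"
  proof (cases "\<exists>i. m i \<ge> 1")
    case True
    then obtain i where i: "m i \<ge> 1" by blast
    have "\<not> card (UNIV :: 'd set) \<le> Suc 0" using assms(3) by simp
    then obtain a b :: 'd where "a \<noteq> b" using card_le_Suc0_iff_eq[of "UNIV :: 'd set"] by auto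
    then obtain j where "j \<noteq> i" by metis
    then show ?thesis using that[of i j] i facet_exponents_add[of m i] by auto
  next
    case False
    then have "m = (\<lambda>_. 0)" by (auto simp: fun_eq_iff not_le)
    then show ?thesis using that[of t t] facet_exponents_add[of m t] assms(2) by auto
  qed
  define \<beta> where "\<beta> l = (if l = j then e else 0)" for l
  have "sum \<beta> UNIV = e" by (simp add: \<beta>_def)
  then have "pvec p \<beta> \<in> Ppoly (p ^ e)" by (rule pvec_in_Ppoly)
  moreover have "real lam * real p ^ (?\<mu> + 1) + (real CARD('d) - real lam) * real p ^ ?\<mu>
      < (\<Sum>i\<in>UNIV. real p ^ (facet_exponents m i + \<beta> i))"
  proof (rule sum_power_gt_secant[where j = t])
    show "(\<Sum>i\<in>UNIV. facet_exponents m i + \<beta> i) = CARD('d) * ?\<mu> + lam"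
      using sum_facet_exponents[OF assms(4)] \<open>sum \<beta> UNIV = e\<close> by (simp add: sum.distrib)
  qed (use jt assms(1) \<beta>_def in auto)
  then have "pvec p \<beta> \<notin> Falpha p e lam (facet_exponents m)"
    unfolding Falpha_def mu_facet_exponents[OF assms(4)] by (simp add: pvec_def power_add)
  ultimately show ?thesis by blast
qed

lemma regular_facet_Falpha:
  fixes m :: "'d::finite \<Rightarrow> nat"
  assumes "prime p" "e \<ge> 2" "1 \<le> lam" "lam < CARD('d)" "sum m UNIV + lam = e"
  shows "regular_facet p e (Falpha p e lam (facet_exponents m))"
proof -
  let ?F = "Falpha p e lam (facet_exponents m)" and ?P = "Ppoly (p ^ e) :: (real^'d) set"
  have p2: "p \<ge> 2" using assms(1) prime_ge_2_nat by blast
  have face: "?F face_of ?P" by (rule Falpha_face_of_Ppoly[OF assms(1,5)])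
  have "convex ?P" unfolding Ppoly_def by simp
  then have "aff_dim ?F < aff_dim ?P"
    using face Falpha_neq_Ppoly[OF p2 assms(2) _ assms(5)] assms(3,4) by (intro face_of_aff_dim_lt) auto
  moreover have "aff_dim ?P \<le> int CARD('d)" using aff_dim_le_DIM[of ?P] by simp
  moreover have "int CARD('d) - 1 \<le> aff_dim ?F" by (rule aff_dim_Falpha_ge[OF p2 assms(3-5)])
  ultimately have "?F facet_of ?P"
    unfolding facet_of_def using face assms(3,4) aff_dim_empty[of ?F] by auto
  then show ?thesis
    unfolding regular_facet_def using assms(3-5) facet_exponents_in_Rset[OF assms(3,5)] by auto
qed

lemma eq_one_if_sum_ge_card:
  fixes f :: "'a \<Rightarrow> nat"
  assumes "finite A" "\<And>j. j \<in> A \<Longrightarrow> f j \<le> 1" "card A \<le> sum f A" "i \<in> A"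
  shows "f i = 1"
proof (rule ccontr)
  assume "f i \<noteq> 1"
  then have "sum f A < (\<Sum>j\<in>A. 1)"
    using assms(1,2,4) by (intro sum_strict_mono_ex1) (auto simp: le_less)
  then show False using assms(3) by simp
qed

lemma unit_box_around_exponent:
  fixes b :: "'d::finite \<Rightarrow> nat"
  assumes "sum b UNIV = e" "e \<ge> 1"
  obtains m where "sum m UNIV + 1 = e" "\<And>i. m i \<le> b i \<and> b i \<le> m i + 1"
proof -
  obtain j where j: "b j \<ge> 1"
    using assms by (metis less_one not_le sum.neutral UNIV_I)
  define m where "m i = b i - of_bool (i = j)" for i
  have "sum b UNIV = (\<Sum>i\<in>UNIV. m i + of_bool (i = j))"
    using j by (intro sum.cong) (auto simp: m_def)
  also have "\<dots> = sum m UNIV + 1" by (simp add: sum.distrib)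
  finally show ?thesis
    using assms(1) by (intro that[of m]) (auto simp: m_def)
qed

lemma unit_box_around_exponents:
  fixes B :: "('d::finite \<Rightarrow> nat) set"
  assumes "B \<noteq> {}" "\<And>b. b \<in> B \<Longrightarrow> sum b UNIV = e" "e \<ge> 1" "CARD('d) \<ge> 2"
    and "\<And>i. Max ((\<lambda>b. b i) ` B) - Min ((\<lambda>b. b i) ` B) \<le> 1"
  obtains m lam where "1 \<le> lam" "lam < CARD('d)" "sum m UNIV + lam = e"
    "\<And>b i. b \<in> B \<Longrightarrow> m i \<le> b i \<and> b i \<le> m i + 1"
proof -
  have fin: "finite ((\<lambda>b. b i) ` B)" for i
  proof (rule finite_subset)
    show "(\<lambda>b. b i) ` B \<subseteq> {..e}"
      using assms(2) member_le_sum[of i UNIV] by fastforce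
  qed simp
  define m where "m i = Min ((\<lambda>b. b i) ` B)" for i
  have box: "m i \<le> b i \<and> b i \<le> m i + 1" if "b \<in> B" for b i
  proof
    show "m i \<le> b i" unfolding m_def using fin that by (intro Min_le) auto
    have "b i \<le> Max ((\<lambda>b. b i) ` B)" using fin that by (intro Max_ge) auto
    then show "b i \<le> m i + 1" using assms(5)[of i] unfolding m_def by linarith
  qed
  define lam where "lam = e - sum m UNIV"
  have excess: "sum m UNIV \<le> e \<and> (\<Sum>i\<in>UNIV. b i - m i) = lam" if "b \<in> B" for b
  proof -
    have "sum m UNIV + (\<Sum>i\<in>UNIV. b i - m i) = sum b UNIV"
      using box[OF that] by (simp add: sum.distrib[symmetric])
    then show ?thesis using assms(2)[OF that] unfolding lam_def by linarith
  qed
  obtain b0 where b0: "b0 \<in> B" using assms(1) by blast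
  show ?thesis
  proof (cases "1 \<le> lam \<and> lam < CARD('d)")
    case True
    then show ?thesis using that[of lam m] box excess[OF b0] unfolding lam_def by auto
  next
    case False
    \<comment> \<open>Then all of \<open>B\<close> is the lower corner \<open>m\<close> (\<open>lam = 0\<close>) or the upper corner \<open>m + 1\<close> (\<open>lam = CARD('d)\<close>).\<close>
    have corner: "b i - m i = of_bool (lam \<noteq> 0)" if "b \<in> B" for b i
    proof (cases "lam = 0")
      case True
      then show ?thesis using excess[OF that] by simp
    next
      case False
      then have "CARD('d) \<le> (\<Sum>j\<in>UNIV. b j - m j)"
        using excess[OF that] \<open>\<not> (1 \<le> lam \<and> lam < CARD('d))\<close> by simp
      moreover have "b j - m j \<le> 1" for j using box[OF that, of j] by linarith
      ultimately have "b i - m i = 1" by (intro eq_one_if_sum_ge_card[of UNIV "\<lambda>j. b j - m j"]) auto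
      then show ?thesis using False by simp
    qed
    have "B = {b0}"
    proof (intro set_eqI iffI)
      fix b assume "b \<in> B"
      then have "b i = b0 i" for i using corner[of b i] corner[OF b0, of i] box[of b i] box[OF b0, of i] by linarith
      then show "b \<in> {b0}" by auto
    qed (use b0 in simp)
    obtain m' where "sum m' UNIV + 1 = e" "\<And>i. m' i \<le> b0 i \<and> b0 i \<le> m' i + 1"
      using unit_box_around_exponent[OF assms(2)[OF b0] assms(3)] by blast
    then show ?thesis using that[of 1 m'] assms(4) \<open>B = {b0}\<close> by auto
  qed
qed

theorem lemma5p2:
  fixes p e :: nat and B :: "('d::finite \<Rightarrow> nat) set"
  assumes "prime p" and "e \<ge> 2" and "CARD('d) \<ge> 2"
    and "B \<noteq> {}"
    and "\<forall>b\<in>B. pvec p b extreme_point_of Ppoly (p ^ e)"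
    and "\<forall>i. Max ((\<lambda>b. b i) ` B) - Min ((\<lambda>b. b i) ` B) \<le> 1"
  shows "\<exists>F. regular_facet p e F \<and> pvec p ` B \<subseteq> {v. v extreme_point_of F}"
proof -
  have exponent_sum: "sum b UNIV = e" if "b \<in> B" for b
    using assms(1,5) that by (blast intro: exponent_sum_of_extreme_point)
  have "1 \<le> e" using assms(2) by simp
  obtain m lam where box: "1 \<le> lam" "lam < CARD('d)" "sum m UNIV + lam = e"
    "\<And>b i. b \<in> B \<Longrightarrow> m i \<le> b i \<and> b i \<le> m i + 1"
    using unit_box_around_exponents[OF assms(4) exponent_sum \<open>1 \<le> e\<close> assms(3) assms(6)[rule_format]]
    by blast
  let ?F = "Falpha p e lam (facet_exponents m)"
  have "pvec p b extreme_point_of ?F" if "b \<in> B" for b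
  proof -
    have "pvec p b \<in> ?F" by (rule pvec_in_Falpha[OF box(3) exponent_sum[OF that] box(4)[OF that]])
    then show ?thesis
      using assms(5) that extreme_point_of_face[OF Falpha_face_of_Ppoly[OF assms(1) box(3)]] by simp
  qed
  then have "pvec p ` B \<subseteq> {v. v extreme_point_of ?F}" by blast
  then show ?thesis using regular_facet_Falpha[OF assms(1,2) box(1-3)] by blast
qed

end
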